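(* Let $(\alpha_n)_{n\ge0}$ be a sequence of positive numbers and $\rho>1$. Let $(Y_n)_{n\ge1}$ be i.i.d. with $\mathbb{P}(Y_1<0)>0$ and $\mathbb{P}(Y_1\ge x)\precsim(\log x)^{-\alpha}$ as $x\to\infty$ for some $\alpha>1$. Let $X_n:=\sum_{k=1}^n\rho^{n-k}\alpha_{n-k}Y_k$. (1) If $(\alpha_n)$ is nondecreasing, there is a constant $c>0$ such that $\mathbb{P}\big(\bigcap_{n=1}^\infty\{X_n\le-c\,\alpha_{n-1}\rho^{n-1}\}\big)>0$. (2) If $0<l\le\alpha_n\le u<\infty$ for all $n\ge0$, there is a constant $c>0$ such that $\mathbb{P}\big(\bigcap_{n=1}^\infty\{X_n\le-c\,\rho^{n-1}\}\big)>0$.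
   Context: $f\precsim g$ as $x\to\infty$ means $\limsup_{x\to\infty}f(x)/g(x)<\infty$. *)

theory Defs
  imports "HOL-Probability.Probability" "HOL-Library.Landau_Symbols"
begin

definition Xseq :: "real \<Rightarrow> (nat \<Rightarrow> real) \<Rightarrow> (nat \<Rightarrow> 'a \<Rightarrow> real) \<Rightarrow> nat \<Rightarrow> 'a \<Rightarrow> real" where
  "Xseq \<rho> a Y n \<omega> = (\<Sum>k=1..n. \<rho> ^ (n - k) * a (n - k) * Y k \<omega>)"

end

theory Submission
  imports Defs
begin

text \<open>
  Fix \<open>d > 0\<close> with \<open>P(Y\<^sub>1 \<le> -d) > 0\<close> and put \<open>s = \<surd>\<rho>\<close>. The tail bound with \<open>\<alpha> > 1\<close> makes
  the probabilities \<open>P(Y\<^sub>1 \<ge> s\<^sup>k)\<close> summable, so by independence (an infinite product of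
  positive factors with summable defects is positive) the event
  \<open>{Y\<^sub>k \<le> -d for k \<le> K} \<inter> {Y\<^sub>k \<le> s\<^sup>k for k > K}\<close> has positive probability for all large \<open>K\<close>.
  If \<open>a\<^sub>k \<le> L a\<^sub>n\<close> for \<open>k \<le> n\<close>, then on this event the summand of \<open>Y\<^sub>1\<close> contributes
  \<open>-d a\<^sub>n\<^sub>-\<^sub>1 \<rho>\<^sup>n\<^sup>-\<^sup>1\<close> to \<open>X\<^sub>n\<close>, the summands of \<open>Y\<^sub>2, \<dots>, Y\<^sub>K\<close> are nonpositive and the
  remaining ones add up to at most \<open>L a\<^sub>n\<^sub>-\<^sub>1 \<rho>\<^sup>n \<Sum>\<^sub>k\<^sub>>\<^sub>K s\<^sup>-\<^sup>k\<close>, which is at most half of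
  the first contribution once \<open>K\<close> is large. Monotone \<open>a\<close> allows \<open>L = 1\<close>, and
  \<open>l \<le> a\<^sub>n \<le> u\<close> allows \<open>L = u / l\<close>.
\<close>

lemma eventually_tail_sums_le:
  fixes f :: "nat \<Rightarrow> real"
  assumes "summable f" "\<And>k. f k \<ge> 0" "\<epsilon> > 0"
  shows "eventually (\<lambda>K. \<forall>N. sum f {K<..N} \<le> \<epsilon>) sequentially"
proof -
  obtain K0 where K0: "\<And>K. K \<ge> K0 \<Longrightarrow> norm (\<Sum>i. f (i + K)) < \<epsilon>"
    using suminf_exist_split[OF assms(3,1)] by blast
  have "sum f {K<..N} \<le> \<epsilon>" if "K \<ge> K0" for K N
  proof -
    have sh: "summable (\<lambda>i. f (i + Suc K))"
      using assms(1) by (rule summable_ignore_initial_segment)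
    have "sum f {K<..N} = (\<Sum>i<N - K. f (i + Suc K))"
    proof -
      have "{K<..N} = (\<lambda>i. i + Suc K) ` {..<N - K}"
        by (auto simp: image_iff) (rule_tac x = "x - Suc K" in bexI; auto)
      then show ?thesis by (simp add: sum.reindex inj_on_def)
    qed
    also have "\<dots> \<le> (\<Sum>i. f (i + Suc K))"
      using sh assms(2) by (intro sum_le_suminf) auto
    also have "\<dots> < \<epsilon>" using K0[of "Suc K"] that by simp
    finally show ?thesis by simp
  qed
  then show ?thesis by (auto simp: eventually_sequentially)
qed

lemma summable_comp_power_if_bigo_ln_powr:
  fixes f :: "real \<Rightarrow> real" and \<alpha> s :: real
  assumes "f \<in> O[at_top](\<lambda>x. ln x powr (- \<alpha>))" "\<alpha> > 1" "s > 1"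
  shows "summable (\<lambda>k. f (s ^ k))"
proof (rule summable_comparison_test_bigo)
  have "filterlim (\<lambda>k. s ^ k) at_top sequentially"
    using Archimedean_eventually_pow[OF assms(3)] unfolding filterlim_at_top
    by (blast intro: eventually_mono less_imp_le)
  with assms(1) have "(\<lambda>k. f (s ^ k)) \<in> O(\<lambda>k. ln (s ^ k) powr (- \<alpha>))"
    by (rule landau_o.big.compose)
  also have "(\<lambda>k::nat. ln (s ^ k) powr (- \<alpha>)) = (\<lambda>k. ln s powr (- \<alpha>) * real k powr (- \<alpha>))"
  proof
    fix k :: nat
    have "ln (s ^ k) = real k * ln s" using assms(3) by (simp add: ln_realpow)
    then show "ln (s ^ k) powr (- \<alpha>) = ln s powr (- \<alpha>) * real k powr (- \<alpha>)"
      using assms(3) by (simp add: powr_mult)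
  qed
  finally show "(\<lambda>k. f (s ^ k)) \<in> O(\<lambda>k. ln s powr (- \<alpha>) * real k powr (- \<alpha>))" .
  show "summable (\<lambda>k. norm (ln s powr (- \<alpha>) * real k powr (- \<alpha>)))"
    using assms(2) by (simp add: summable_real_powr_iff)
qed

lemma (in prob_space) ex_prob_le_neg_pos:
  fixes X :: "'a \<Rightarrow> real"
  assumes X: "X \<in> borel_measurable M" and pos: "prob {\<omega> \<in> space M. X \<omega> < 0} > 0"
  shows "\<exists>d>0. prob {\<omega> \<in> space M. X \<omega> \<le> - d} > 0"
proof (rule ccontr)
  assume none: "\<not> ?thesis"
  define B where "B m = {\<omega> \<in> space M. X \<omega> \<le> - (1 / real (Suc m))}" for m
  have not_pos: "\<not> prob (B m) > 0" for m
    using none unfolding B_def by (metis of_nat_0_less_iff zero_less_Suc zero_less_divide_1_iff)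
  have "prob (B m) = 0" for m
    using not_pos[of m] measure_nonneg[of M "B m"] by linarith
  then have "(\<lambda>m. prob (B m)) \<longlonglongrightarrow> 0" by simp
  moreover have "(\<lambda>m. prob (B m)) \<longlonglongrightarrow> prob (\<Union>m. B m)"
    using X unfolding B_def by (intro finite_Lim_measure_incseq)
      (auto simp: incseq_def frac_le intro: order.trans)
  moreover have "(\<Union>m. B m) = {\<omega> \<in> space M. X \<omega> < 0}"
  proof (intro equalityI subsetI)
    fix \<omega> assume "\<omega> \<in> {\<omega> \<in> space M. X \<omega> < 0}"
    then obtain m where "\<omega> \<in> space M" "inverse (real (Suc m)) < - X \<omega>"
      using reals_Archimedean[of "- X \<omega>"] by auto
    then show "\<omega> \<in> (\<Union>m. B m)"
      unfolding B_def by (auto simp: field_simps intro!: exI[of _ m])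
  next
    fix \<omega> assume "\<omega> \<in> (\<Union>m. B m)"
    then obtain m where "\<omega> \<in> space M" "X \<omega> \<le> - (1 / real (Suc m))" unfolding B_def by blast
    moreover have "X \<omega> < 0"
      using \<open>X \<omega> \<le> - (1 / real (Suc m))\<close> by (rule le_less_trans) simp
    ultimately show "\<omega> \<in> {\<omega> \<in> space M. X \<omega> < 0}" by simp
  qed
  ultimately show False
    using pos LIMSEQ_unique by fastforce
qed

lemma (in prob_space) prob_INT_indep_events_pos:
  fixes A :: "nat \<Rightarrow> 'a set"
  assumes indep: "indep_events A I" and "I \<noteq> {}"
    and pos: "\<And>i. i \<in> I \<Longrightarrow> prob (A i) > 0"
    and summ: "summable (\<lambda>i. 1 - prob (A i))"
  shows "prob (\<Inter>i\<in>I. A i) > 0"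
proof -
  obtain K where K: "\<And>N. (\<Sum>i\<in>{K<..N}. 1 - prob (A i)) \<le> 1 / 2"
    using eventually_tail_sums_le[OF summ, of "1 / 2"] by (auto simp: eventually_sequentially)
  obtain i0 where "i0 \<in> I" using \<open>I \<noteq> {}\<close> by blast
  \<comment> \<open>The offset keeps every index set nonempty, so that each \<open>H n\<close> is an event.\<close>
  define H where "H n = (\<Inter>i \<in> I \<inter> {..n + max i0 K}. A i)" for n
  define Q where "Q = (\<Prod>i \<in> I \<inter> {..K}. prob (A i))"
  have Q: "Q > 0" unfolding Q_def using pos by (intro prod_pos) auto
  have idx: "I \<inter> {..n + max i0 K} \<noteq> {}" for n using \<open>i0 \<in> I\<close> by auto
  have H_events: "H n \<in> events" for n
    unfolding H_def using indep idx by (intro sets.finite_INT) (auto simp: indep_events_def)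
  have "prob (H n) \<ge> Q / 2" for n
  proof -
    define J where "J = I \<inter> {K<..n + max i0 K}"
    have split: "I \<inter> {..n + max i0 K} = (I \<inter> {..K}) \<union> J" unfolding J_def by auto
    have "1 / 2 \<le> 1 - (\<Sum>i\<in>J. 1 - prob (A i))"
      using K[of "n + max i0 K"] sum_mono2[of "{K<..n + max i0 K}" J "\<lambda>i. 1 - prob (A i)"]
      unfolding J_def by auto
    also have "\<dots> \<le> (\<Prod>i\<in>J. 1 - (1 - prob (A i)))"
      by (intro Weierstrass_prod_ineq) auto
    finally have tail: "1 / 2 \<le> (\<Prod>i\<in>J. prob (A i))" by simp
    have "prob (H n) = (\<Prod>i \<in> I \<inter> {..n + max i0 K}. prob (A i))"
      using indep idx unfolding H_def indep_events_def by (metis finite_Int finite_atMost inf_le1)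
    also have "\<dots> = Q * (\<Prod>i\<in>J. prob (A i))"
      unfolding split Q_def by (intro prod.union_disjoint) (auto simp: J_def)
    finally show ?thesis using tail Q by (simp add: mult_left_mono[of "1/2", simplified])
  qed
  moreover have "(\<lambda>n. prob (H n)) \<longlonglongrightarrow> prob (\<Inter>n. H n)"
    using H_events by (intro finite_Lim_measure_decseq) (auto simp: decseq_def H_def)
  ultimately have "prob (\<Inter>n. H n) \<ge> Q / 2"
    by (intro LIMSEQ_le_const) auto
  moreover have "(\<Inter>n. H n) = (\<Inter>i\<in>I. A i)"
    unfolding H_def by (auto intro: le_add1[THEN order_trans])
  ultimately show ?thesis using Q by simp
qed

lemma (in prob_space) prob_eq_if_distr_eq:
  assumes "X \<in> borel_measurable M" "Y \<in> borel_measurable M"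
    and "distr M borel X = distr M borel Y" and "B \<in> sets borel"
  shows "prob {\<omega> \<in> space M. X \<omega> \<in> B} = prob {\<omega> \<in> space M. Y \<omega> \<in> B}"
proof -
  have "prob {\<omega> \<in> space M. X \<omega> \<in> B} = measure (distr M borel X) B"
    using assms(1,4) by (simp add: measure_distr vimage_def Int_def conj_commute)
  also have "\<dots> = prob {\<omega> \<in> space M. Y \<omega> \<in> B}"
    using assms(2-4) by (simp add: measure_distr vimage_def Int_def conj_commute)
  finally show ?thesis .
qed

lemma borel_measurable_Xseq:
  assumes "\<And>k. k \<ge> 1 \<Longrightarrow> Y k \<in> borel_measurable M"
  shows "Xseq \<rho> a Y n \<in> borel_measurable M"
  unfolding Xseq_def using assms by (intro borel_measurable_sum borel_measurable_times) auto

lemma sets_Xseq_le: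
  assumes "\<And>k. k \<ge> 1 \<Longrightarrow> Y k \<in> borel_measurable M"
  shows "{\<omega> \<in> space M. \<forall>n\<ge>1. Xseq \<rho> a Y n \<omega> \<le> g n} \<in> sets M"
proof -
  have "{\<omega> \<in> space M. \<forall>n\<ge>1. Xseq \<rho> a Y n \<omega> \<le> g n}
      = space M \<inter> (\<Inter>n\<in>{1..}. {\<omega> \<in> space M. Xseq \<rho> a Y n \<omega> \<le> g n})"
    by auto
  also have "\<dots> \<in> sets M"
    using borel_measurable_Xseq[OF assms]
    by (intro sets.Int sets.countable_INT') (auto intro: borel_measurable_le)
  finally show ?thesis .
qed

lemma Xseq_le_neg_of_bounds:
  fixes Y :: "nat \<Rightarrow> 'a \<Rightarrow> real" and a :: "nat \<Rightarrow> real"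
  assumes a_pos: "\<And>n. a n > 0" and \<rho>: "\<rho> > 0" and L: "L > 0" and s: "s > 0"
    and aL: "\<And>n k. k \<le> n \<Longrightarrow> a k \<le> L * a n"
    and "K \<ge> 1" and d: "d \<ge> 0"
    and path: "\<And>k. k \<ge> 1 \<Longrightarrow> Y k \<omega> \<le> (if k \<le> K then - d else s ^ k)"
    and geom: "\<And>N. (\<Sum>k\<in>{K<..N}. (s / \<rho>) ^ k) \<le> d / (2 * L * \<rho>)"
    and "n \<ge> 1"
  shows "Xseq \<rho> a Y n \<omega> \<le> - (d / 2) * a (n - 1) * \<rho> ^ (n - 1)"
proof -
  define Z where "Z = L * a (n - 1) * \<rho> ^ n"
  have coef: "\<rho> ^ m * a m' \<ge> 0" for m m' using \<rho> a_pos[of m'] by simp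
  have "\<rho> ^ (n - 1) * a (n - 1) * Y 1 \<omega> \<le> \<rho> ^ (n - 1) * a (n - 1) * (- d)"
    using path[of 1] \<open>K \<ge> 1\<close> by (intro mult_left_mono coef) auto
  then have first: "\<rho> ^ (n - 1) * a (n - 1) * Y 1 \<omega> \<le> - d * a (n - 1) * \<rho> ^ (n - 1)"
    by (simp add: algebra_simps)
  have rest: "\<rho> ^ (n - k) * a (n - k) * Y k \<omega> \<le> (if K < k then Z * (s / \<rho>) ^ k else 0)"
    if k: "k \<in> {2..n}" for k
  proof (cases "K < k")
    case True
    have "\<rho> ^ (n - k) * a (n - k) * Y k \<omega> \<le> \<rho> ^ (n - k) * a (n - k) * s ^ k"
      using path[of k] k True by (intro mult_left_mono coef) auto
    also have "\<dots> \<le> \<rho> ^ (n - k) * (L * a (n - 1)) * s ^ k"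
      using aL[of "n - k" "n - 1"] k \<rho> s by (intro mult_right_mono mult_left_mono) auto
    also have "\<dots> = L * a (n - 1) * (\<rho> ^ (n - k) * s ^ k)"
      by (simp only: ac_simps)
    also have "\<dots> = Z * (s / \<rho>) ^ k"
      using k \<rho> by (simp add: Z_def power_divide power_diff)
    finally show ?thesis using True by simp
  next
    case False
    then have "Y k \<omega> \<le> 0" using path[of k] k d by auto
    then show ?thesis using False coef[of "n - k" "n - k"] by (simp add: mult_nonneg_nonpos)
  qed
  have "(\<Sum>k\<in>{2..n}. \<rho> ^ (n - k) * a (n - k) * Y k \<omega>)
      \<le> (\<Sum>k\<in>{2..n}. if K < k then Z * (s / \<rho>) ^ k else 0)"
    using rest by (intro sum_mono)
  also have "\<dots> = (\<Sum>k\<in>{k \<in> {2..n}. K < k}. Z * (s / \<rho>) ^ k)"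
    by (rule sum.inter_filter[symmetric]) simp
  also have "{k \<in> {2..n}. K < k} = {K<..n}" using \<open>K \<ge> 1\<close> by auto
  also have "(\<Sum>k\<in>{K<..n}. Z * (s / \<rho>) ^ k) = Z * (\<Sum>k\<in>{K<..n}. (s / \<rho>) ^ k)"
    by (simp add: sum_distrib_left)
  also have "\<dots> \<le> Z * (d / (2 * L * \<rho>))"
    using geom a_pos[of "n - 1"] L \<rho> by (intro mult_left_mono) (auto simp: Z_def)
  also have "\<dots> = d / 2 * a (n - 1) * \<rho> ^ (n - 1)"
  proof -
    obtain m where n: "n = Suc m" using \<open>n \<ge> 1\<close> by (cases n) auto
    show ?thesis using L \<rho> unfolding Z_def n by (simp add: divide_simps)
  qed
  finally have "(\<Sum>k\<in>{2..n}. \<rho> ^ (n - k) * a (n - k) * Y k \<omega>) \<le> d / 2 * a (n - 1) * \<rho> ^ (n - 1)" .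
  moreover have "Xseq \<rho> a Y n \<omega>
      = \<rho> ^ (n - 1) * a (n - 1) * Y 1 \<omega> + (\<Sum>k\<in>{2..n}. \<rho> ^ (n - k) * a (n - k) * Y k \<omega>)"
  proof -
    have "{1..n} = insert 1 {2..n}" using \<open>n \<ge> 1\<close> by auto
    then show ?thesis unfolding Xseq_def by simp
  qed
  ultimately show ?thesis using first by linarith
qed

locale Xseq_log_tail = prob_space M for M :: "'a measure" +
  fixes Y :: "nat \<Rightarrow> 'a \<Rightarrow> real" and a :: "nat \<Rightarrow> real" and \<rho> \<alpha> :: real
  assumes a_pos: "\<And>n. a n > 0" and \<rho>: "\<rho> > 1"
    and rv: "\<And>n. n \<ge> 1 \<Longrightarrow> Y n \<in> borel_measurable M"
    and indep: "indep_vars (\<lambda>_. borel) Y {1..}"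
    and ident: "\<And>n. n \<ge> 1 \<Longrightarrow> distr M borel (Y n) = distr M borel (Y 1)"
    and neg: "prob {\<omega> \<in> space M. Y 1 \<omega> < 0} > 0"
    and \<alpha>: "\<alpha> > 1"
    and tail: "(\<lambda>x. prob {\<omega> \<in> space M. Y 1 \<omega> \<ge> x}) \<in> O[at_top](\<lambda>x. ln x powr (- \<alpha>))"
begin

lemma Y1_borel: "Y 1 \<in> borel_measurable M"
  using rv by simp

lemma prob_path_bounded_pos:
  assumes c: "prob {\<omega> \<in> space M. Y 1 \<omega> \<le> c} > 0"
    and summ: "summable (\<lambda>k. prob {\<omega> \<in> space M. Y 1 \<omega> \<ge> t k})"
    and lt1: "\<And>k. k > K \<Longrightarrow> prob {\<omega> \<in> space M. Y 1 \<omega> \<ge> t k} < 1"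
  shows "prob {\<omega> \<in> space M. \<forall>k\<ge>1. Y k \<omega> \<le> (if k \<le> K then c else t k)} > 0"
proof -
  define b where "b k = (if k \<le> K then c else t k)" for k
  define A where "A k = {\<omega> \<in> space M. Y k \<omega> \<le> b k}" for k
  have prob_A: "prob (A k) = prob {\<omega> \<in> space M. Y 1 \<omega> \<le> b k}" if "k \<ge> 1" for k
    using prob_eq_if_distr_eq[OF rv[OF that] Y1_borel ident[OF that], of "{..b k}"]
    by (simp add: A_def)
  have compl: "1 - prob (A k) \<le> prob {\<omega> \<in> space M. Y 1 \<omega> \<ge> t k}" if "k > K" for k
  proof -
    have ev: "{\<omega> \<in> space M. Y 1 \<omega> \<ge> t k} \<in> events" using Y1_borel by measurable
    have "space M - {\<omega> \<in> space M. Y 1 \<omega> \<ge> t k} \<subseteq> {\<omega> \<in> space M. Y 1 \<omega> \<le> b k}"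
      using that by (auto simp: b_def)
    then have "prob (space M - {\<omega> \<in> space M. Y 1 \<omega> \<ge> t k}) \<le> prob {\<omega> \<in> space M. Y 1 \<omega> \<le> b k}"
      using Y1_borel by (intro finite_measure_mono) measurable
    then show ?thesis using prob_compl[OF ev] prob_A[of k] that by simp
  qed
  have "summable (\<lambda>k. 1 - prob (A k))"
  proof (rule summable_comparison_test')
    show "norm (1 - prob (A k)) \<le> prob {\<omega> \<in> space M. Y 1 \<omega> \<ge> t k}" if "k \<ge> Suc K" for k
      using compl[of k] that by simp
  qed (fact summ)
  moreover have "prob (A k) > 0" if "k \<ge> 1" for k
    using prob_A[OF that] c compl[of k] lt1[of k] by (cases "k \<le> K") (auto simp: b_def)
  moreover have "indep_events A {1..}"
    unfolding A_def using indep by (intro indep_eventsI_indep_vars) auto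
  ultimately have "prob (\<Inter>k\<in>{1..}. A k) > 0"
    by (intro prob_INT_indep_events_pos) auto
  also have "(\<Inter>k\<in>{1..}. A k) = {\<omega> \<in> space M. \<forall>k\<ge>1. Y k \<omega> \<le> b k}"
    unfolding A_def by auto
  finally show ?thesis by (simp only: b_def)
qed

lemma eventually_prob_path_bounded_pos:
  assumes s: "s > 1" and c: "prob {\<omega> \<in> space M. Y 1 \<omega> \<le> c} > 0"
  shows "eventually (\<lambda>K. prob {\<omega> \<in> space M. \<forall>k\<ge>1. Y k \<omega> \<le> (if k \<le> K then c else s ^ k)} > 0)
    sequentially"
proof -
  have summ: "summable (\<lambda>k. prob {\<omega> \<in> space M. Y 1 \<omega> \<ge> s ^ k})"
    using tail \<alpha> s by (rule summable_comp_power_if_bigo_ln_powr)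
  have "eventually (\<lambda>k. prob {\<omega> \<in> space M. Y 1 \<omega> \<ge> s ^ k} < 1) sequentially"
    using summable_LIMSEQ_zero[OF summ] by (rule order_tendstoD) simp
  then obtain N where "\<And>k. k \<ge> N \<Longrightarrow> prob {\<omega> \<in> space M. Y 1 \<omega> \<ge> s ^ k} < 1"
    by (auto simp: eventually_sequentially)
  then have "prob {\<omega> \<in> space M. \<forall>k\<ge>1. Y k \<omega> \<le> (if k \<le> K then c else s ^ k)} > 0" if "K \<ge> N" for K
    using that by (intro prob_path_bounded_pos[OF c summ]) auto
  then show ?thesis unfolding eventually_sequentially by blast
qed

lemma prob_Xseq_le_neg_pos:
  assumes L: "L > 0" and aL: "\<And>n k. k \<le> n \<Longrightarrow> a k \<le> L * a n"
  shows "\<exists>c>0. prob {\<omega> \<in> space M. \<forall>n\<ge>1. Xseq \<rho> a Y n \<omega> \<le> - c * a (n - 1) * \<rho> ^ (n - 1)} > 0"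
proof -
  obtain d where d: "d > 0" "prob {\<omega> \<in> space M. Y 1 \<omega> \<le> - d} > 0"
    using ex_prob_le_neg_pos[OF Y1_borel neg] by auto
  define s where "s = sqrt \<rho>"
  have s: "s > 1" "s / \<rho> = 1 / s"
  proof -
    show "s > 1" using \<rho> by (simp add: s_def)
    moreover have "s * s = \<rho>" using \<rho> by (simp add: s_def)
    ultimately show "s / \<rho> = 1 / s" by (auto simp: field_simps)
  qed
  have "summable (\<lambda>k. (s / \<rho>) ^ k)"
    using s by (auto intro: summable_geometric)
  then have "eventually (\<lambda>K. \<forall>N. (\<Sum>k\<in>{K<..N}. (s / \<rho>) ^ k) \<le> d / (2 * L * \<rho>)) sequentially"
    using s d L \<rho> by (intro eventually_tail_sums_le) auto
  moreover note eventually_prob_path_bounded_pos[OF s(1) d(2)] eventually_ge_at_top[of 1]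
  ultimately have "eventually (\<lambda>K. (\<forall>N. (\<Sum>k\<in>{K<..N}. (s / \<rho>) ^ k) \<le> d / (2 * L * \<rho>))
      \<and> prob {\<omega> \<in> space M. \<forall>k\<ge>1. Y k \<omega> \<le> (if k \<le> K then - d else s ^ k)} > 0 \<and> K \<ge> 1)
      sequentially"
    by eventually_elim blast
  then obtain K where K: "\<And>N. (\<Sum>k\<in>{K<..N}. (s / \<rho>) ^ k) \<le> d / (2 * L * \<rho>)"
    and path: "prob {\<omega> \<in> space M. \<forall>k\<ge>1. Y k \<omega> \<le> (if k \<le> K then - d else s ^ k)} > 0"
    and "K \<ge> 1"
    unfolding eventually_sequentially by blast
  have "{\<omega> \<in> space M. \<forall>k\<ge>1. Y k \<omega> \<le> (if k \<le> K then - d else s ^ k)}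
      \<subseteq> {\<omega> \<in> space M. \<forall>n\<ge>1. Xseq \<rho> a Y n \<omega> \<le> - (d / 2) * a (n - 1) * \<rho> ^ (n - 1)}"
  proof
    fix \<omega> assume "\<omega> \<in> {\<omega> \<in> space M. \<forall>k\<ge>1. Y k \<omega> \<le> (if k \<le> K then - d else s ^ k)}"
    then have "\<omega> \<in> space M" and path_\<omega>: "\<And>k. k \<ge> 1 \<Longrightarrow> Y k \<omega> \<le> (if k \<le> K then - d else s ^ k)"
      by auto
    show "\<omega> \<in> {\<omega> \<in> space M. \<forall>n\<ge>1. Xseq \<rho> a Y n \<omega> \<le> - (d / 2) * a (n - 1) * \<rho> ^ (n - 1)}"
    proof (intro CollectI conjI allI impI \<open>\<omega> \<in> space M\<close>)
      fix n :: nat assume "n \<ge> 1"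
      show "Xseq \<rho> a Y n \<omega> \<le> - (d / 2) * a (n - 1) * \<rho> ^ (n - 1)"
        using \<rho> s d L \<open>K \<ge> 1\<close> \<open>n \<ge> 1\<close>
        by (intro Xseq_le_neg_of_bounds[where K = K and s = s and L = L] a_pos aL path_\<omega> K) auto
    qed
  qed
  then have "prob {\<omega> \<in> space M. \<forall>n\<ge>1. Xseq \<rho> a Y n \<omega> \<le> - (d / 2) * a (n - 1) * \<rho> ^ (n - 1)} > 0"
    using path sets_Xseq_le[OF rv] by (meson finite_measure_mono less_le_trans)
  moreover have "d / 2 > 0" using d(1) by simp
  ultimately show ?thesis by blast
qed

lemma prob_Xseq_le_neg_pos_mono:
  assumes "mono a"
  shows "\<exists>c>0. prob {\<omega> \<in> space M. \<forall>n\<ge>1. Xseq \<rho> a Y n \<omega> \<le> - c * a (n - 1) * \<rho> ^ (n - 1)} > 0"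
  using assms by (intro prob_Xseq_le_neg_pos[of 1]) (auto dest: monoD)

lemma prob_Xseq_le_neg_pos_bounded:
  assumes l: "l > 0" and lu: "\<And>n. l \<le> a n \<and> a n \<le> u"
  shows "\<exists>c>0. prob {\<omega> \<in> space M. \<forall>n\<ge>1. Xseq \<rho> a Y n \<omega> \<le> - c * \<rho> ^ (n - 1)} > 0"
proof -
  have "a k \<le> u / l * a n" for n k
  proof -
    have "a k \<le> u / l * l" using lu[of k] l by simp
    also have "\<dots> \<le> u / l * a n" using lu[of n] lu[of 0] l by (intro mult_left_mono) auto
    finally show ?thesis .
  qed
  moreover have "u / l > 0" using lu[of 0] l by auto
  ultimately obtain c where c: "c > 0"
    and pos: "prob {\<omega> \<in> space M. \<forall>n\<ge>1. Xseq \<rho> a Y n \<omega> \<le> - c * a (n - 1) * \<rho> ^ (n - 1)} > 0"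
    using prob_Xseq_le_neg_pos by blast
  have "- c * a (n - 1) * \<rho> ^ (n - 1) \<le> - (c * l) * \<rho> ^ (n - 1)" for n
  proof -
    have "c * l * \<rho> ^ (n - 1) \<le> c * a (n - 1) * \<rho> ^ (n - 1)"
      using c lu \<rho> by (intro mult_right_mono mult_left_mono) auto
    then show ?thesis by simp
  qed
  then have "{\<omega> \<in> space M. \<forall>n\<ge>1. Xseq \<rho> a Y n \<omega> \<le> - c * a (n - 1) * \<rho> ^ (n - 1)}
      \<subseteq> {\<omega> \<in> space M. \<forall>n\<ge>1. Xseq \<rho> a Y n \<omega> \<le> - (c * l) * \<rho> ^ (n - 1)}"
    by (fastforce intro: order.trans)
  then have "prob {\<omega> \<in> space M. \<forall>n\<ge>1. Xseq \<rho> a Y n \<omega> \<le> - (c * l) * \<rho> ^ (n - 1)} > 0"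
    using pos sets_Xseq_le[OF rv] by (meson finite_measure_mono less_le_trans)
  moreover have "c * l > 0" using c l by simp
  ultimately show ?thesis by blast
qed

end

theorem mainTheorem20:
  fixes M :: "'a measure" and Y :: "nat \<Rightarrow> 'a \<Rightarrow> real"
    and a :: "nat \<Rightarrow> real" and \<rho> \<alpha> :: real
  assumes "prob_space M"
    and a_pos: "\<And>n. a n > 0"
    and rho: "\<rho> > 1"
    and rv: "\<And>n. n \<ge> 1 \<Longrightarrow> Y n \<in> borel_measurable M"
    and indep: "prob_space.indep_vars M (\<lambda>_. borel) Y {1..}"
    and ident: "\<And>n. n \<ge> 1 \<Longrightarrow> distr M borel (Y n) = distr M borel (Y 1)"
    and neg: "measure M {\<omega> \<in> space M. Y 1 \<omega> < 0} > 0"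
    and alpha: "\<alpha> > 1"
    and tail: "(\<lambda>x. measure M {\<omega> \<in> space M. Y 1 \<omega> \<ge> x}) \<in> O[at_top](\<lambda>x. ln x powr (- \<alpha>))"
  shows "(mono a \<longrightarrow> (\<exists>c>0. measure M {\<omega> \<in> space M. \<forall>n\<ge>1.
              Xseq \<rho> a Y n \<omega> \<le> - c * a (n - 1) * \<rho> ^ (n - 1)} > 0))
       \<and> ((\<exists>l u. 0 < l \<and> (\<forall>n. l \<le> a n \<and> a n \<le> u)) \<longrightarrow>
            (\<exists>c>0. measure M {\<omega> \<in> space M. \<forall>n\<ge>1.
              Xseq \<rho> a Y n \<omega> \<le> - c * \<rho> ^ (n - 1)} > 0))"
proof -
  interpret Xseq_log_tail M Y a \<rho> \<alpha>
    using assms by (intro Xseq_log_tail.intro Xseq_log_tail_axioms.intro)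
  show ?thesis
    using prob_Xseq_le_neg_pos_mono prob_Xseq_le_neg_pos_bounded by blast
qed

end
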